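(* Under the full-support assumption and with $\eta L<\tfrac12$, for every $t\ge1$, \[ \langle\log\hat{\bm\pi}^{(t+1)}-\log{\bm\pi}^*,\eta\bm P\hat{\bm\pi}^{(t)}-\eta\bm P\hat{\bm\pi}^{(t+1)}\rangle\ge-\frac{(e^{2\eta L}-1)(e^{\eta L}+1)}{2\varepsilon}|\mathbb{A}|(\Theta_{t+1}+2e^{-1})\hat K^{(t+1)}. \]
   Context: $\mathbb{A}$ finite, $\Delta(\mathbb{A})$ the simplex, $\bm P$ skew-symmetric, $L=\max_{a,a'}|P_{a,a'}|$. $\mathbb{M}$: Nash equilibria, i.e. ${\bm\pi}\in\Delta(\mathbb{A})$ with $\max_a(\bm P{\bm\pi})_a\le0$. Full-support assumption: every $a$ has some ${\bm\pi}\in\mathbb{M}$ with $\pi_a>0$. $p({\bm\pi})=\arg\min_{{\bm\pi}'\in\mathbb{M}}D_{\mathrm{KL}}({\bm\pi}'\|{\bm\pi})$ for positive ${\bm\pi}$. OMWU with $\eta>0$: $\hat{\bm\pi}^{(1)}$ positive, ${\bm\pi}^{(0)}=\hat{\bm\pi}^{(1)}$, for $t\ge1$ $\pi^{(t)}_a\propto\hat\pi^{(t)}_a e^{\eta(\bm P{\bm\pi}^{(t-1)})_a}$, $\hat\pi^{(t+1)}_a\propto\hat\pi^{(t)}_a e^{\eta(\bm P{\bm\pi}^{(t)})_a}$ (normalized). ${\bm\pi}^*=p(\hat{\bm\pi}^{(1)})$, $\varepsilon=\min_a\pi^*_a$. $\Theta_t=D_{\mathrm{KL}}({\bm\pi}^*\|\hat{\bm\pi}^{(t)})+4\eta^2L^2D_{\mathrm{KL}}(\hat{\bm\pi}^{(t)}\|{\bm\pi}^{(t-1)})$.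 $\hat K^{(t+1)}=\max_a\hat\pi^{(t)}_a|\eta(\bm P{\bm\pi}^{(t)})_a|$. Logarithms are componentwise. *)

theory Defs
  imports Complex_Main
begin

definition simplex :: "('a::finite \<Rightarrow> real) set" where
  "simplex = {\<pi>. (\<forall>a. 0 \<le> \<pi> a) \<and> (\<Sum>a\<in>UNIV. \<pi> a) = 1}"

definition skew_symmetric :: "('a \<Rightarrow> 'a \<Rightarrow> real) \<Rightarrow> bool" where
  "skew_symmetric P \<longleftrightarrow> (\<forall>a b. P a b = - P b a)"

definition mat_vec :: "('a::finite \<Rightarrow> 'a \<Rightarrow> real) \<Rightarrow> ('a \<Rightarrow> real) \<Rightarrow> 'a \<Rightarrow> real" where
  "mat_vec P \<pi> a = (\<Sum>b\<in>UNIV. P a b * \<pi> b)"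

definition inner_prod :: "('a::finite \<Rightarrow> real) \<Rightarrow> ('a \<Rightarrow> real) \<Rightarrow> real" where
  "inner_prod x y = (\<Sum>a\<in>UNIV. x a * y a)"

definition maxabs :: "('a::finite \<Rightarrow> 'a \<Rightarrow> real) \<Rightarrow> real" where
  "maxabs P = Max {\<bar>P a b\<bar> | a b. True}"

definition nash :: "('a::finite \<Rightarrow> 'a \<Rightarrow> real) \<Rightarrow> ('a \<Rightarrow> real) set" where
  "nash P = {\<pi> \<in> simplex. \<forall>a. mat_vec P \<pi> a \<le> 0}"

definition KL :: "('a::finite \<Rightarrow> real) \<Rightarrow> ('a \<Rightarrow> real) \<Rightarrow> real" where
  "KL p q = (\<Sum>a\<in>UNIV. if p a = 0 then 0 else p a * ln (p a / q a))"

definition kl_proj :: "('a::finite \<Rightarrow> 'a \<Rightarrow> real) \<Rightarrow> ('a \<Rightarrow> real) \<Rightarrow> ('a \<Rightarrow> real)" where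
  "kl_proj P \<pi> = (SOME \<pi>'. \<pi>' \<in> nash P \<and> (\<forall>\<sigma>\<in>nash P. KL \<pi>' \<pi> \<le> KL \<sigma> \<pi>))"

definition mw_step :: "('a::finite \<Rightarrow> real) \<Rightarrow> ('a \<Rightarrow> real) \<Rightarrow> 'a \<Rightarrow> real" where
  "mw_step x g a = x a * exp (g a) / (\<Sum>b\<in>UNIV. x b * exp (g b))"

end

theory Submission
  imports Defs "HOL-Analysis.Function_Topology" "HOL-Analysis.Convex" "HOL-Real_Asymp.Real_Asymp"
begin

(* Write p = pihat^(t+1) and v = eta P (pihat^(t) - p).  By Hoelder the left-hand side is at least
   -||v||_oo ||log p - log pi*||_1, and the two factors are estimated separately.

   Every entry of pi* is at least eps, so eps ||log p - log pi*||_1 is at most KL(pi*||p) plus twice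
   the entropy excess over the coordinates where p > pi*; that excess is at most max (-X ln X) = 1/e.

   ||v||_oo <= eta L ||pihat^(t) - p||_1, and one multiplicative-weights step with payoffs |g_a| <= x,
   here x = eta L, moves q = pihat^(t) in l1 by at most 2 e^x sum_a q_a |e^(g_a) - 1|, which by convexity
   of exp is at most 2 e^x (e^x - 1)/x sum_a q_a |g_a|.  The constant then comes from
   4 y (y - 1) <= (y^2 - 1)(y + 1) for y = e^x >= 1.

   That eps > 0 is where the full-support assumption enters: a KL minimiser over the convex Nash set
   cannot vanish where another equilibrium is positive, because s ln s has slope -oo at s = 0. *)

section \<open>Relative entropy\<close>

definition kl_term :: "real \<Rightarrow> real \<Rightarrow> real" where
  "kl_term q u = (if u = 0 then 0 else u * ln (u / q))"

lemma KL_eq_sum_kl_term: "KL p q = (\<Sum>a\<in>UNIV. kl_term (q a) (p a))"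
  by (simp add: KL_def kl_term_def)

lemma KL_eq_sum_ln_diff:
  assumes "\<forall>a. 0 < p a" "\<forall>a. 0 < q a"
  shows "KL p q = (\<Sum>a\<in>UNIV. p a * (ln (p a) - ln (q a)))"
  unfolding KL_def using assms by (intro sum.cong refl) (simp add: ln_divide_pos)

lemma continuous_on_kl_term:
  assumes "0 < q"
  shows "continuous_on {0..} (kl_term q)"
proof -
  have "continuous (at u within {0..}) (kl_term q)" if "u \<ge> 0" for u
  proof (cases "u = 0")
    case True
    have "((\<lambda>x::real. x * ln x - x * ln q) \<longlongrightarrow> 0) (at_right 0)"
      by real_asymp
    moreover have "\<forall>\<^sub>F x in at_right 0. x * ln x - x * ln q = kl_term q x"
      using eventually_at_right_less[of 0]
      by eventually_elim (use assms in \<open>auto simp: kl_term_def ln_div algebra_simps\<close>)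
    ultimately have "(kl_term q \<longlongrightarrow> 0) (at_right 0)"
      by (rule Lim_transform_eventually)
    then show ?thesis
      using True by (simp add: continuous_within at_within_Ici_at_right kl_term_def)
  next
    case False
    with that have "0 < u" by simp
    have "continuous (at u) (\<lambda>x. x * ln (x / q))"
      using \<open>0 < u\<close> assms by (intro continuous_intros) auto
    moreover have "\<forall>\<^sub>F x in nhds u. x * ln (x / q) = kl_term q x"
      using eventually_nhds_in_open[of "{0<..}" u] \<open>0 < u\<close>
      by (auto elim!: eventually_mono simp: kl_term_def)
    ultimately show ?thesis
      using isCont_cong continuous_at_imp_continuous_at_within by metis
  qed
  then show ?thesis
    using continuous_on_eq_continuous_within by blast
qed

lemma kl_term_tangent:
  assumes "0 \<le> u" "0 < w" "0 < q"
  shows "u - w \<le> kl_term q u - u * ln (w / q)"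
proof (cases "u = 0")
  case True
  then show ?thesis using assms by (simp add: kl_term_def)
next
  case False
  with assms have "0 < u" by simp
  have "u * ln (w / u) \<le> u * (w / u - 1)"
    using \<open>0 < u\<close> assms by (intro mult_left_mono ln_le_minus_one) auto
  also have "\<dots> = w - u"
    using \<open>0 < u\<close> by (simp add: field_simps)
  finally have "u * ln (w / u) \<le> w - u" .
  moreover have "ln (u / q) = ln (w / q) - ln (w / u)"
    using \<open>0 < u\<close> assms by (simp add: ln_div)
  ultimately show ?thesis
    using False by (simp add: kl_term_def right_diff_distrib)
qed

lemma kl_term_convex:
  assumes "0 \<le> u" "0 \<le> v" "0 < q" "0 \<le> t" "t \<le> 1"
  shows "kl_term q ((1 - t) * u + t * v) \<le> (1 - t) * kl_term q u + t * kl_term q v"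
proof (cases "(1 - t) * u + t * v = 0")
  case True
  then have "t = 0 \<or> t = 1 \<or> (u = 0 \<and> v = 0)"
    using assms by (smt (verit) mult_nonneg_nonneg mult_pos_pos)
  then show ?thesis
    using True by (auto simp: kl_term_def)
next
  case False
  define w where "w = (1 - t) * u + t * v"
  have "0 < w"
    using False assms unfolding w_def by (smt (verit) mult_nonneg_nonneg)
  have "(1 - t) * (u - w) \<le> (1 - t) * (kl_term q u - u * ln (w / q))"
    using kl_term_tangent[OF assms(1) \<open>0 < w\<close> assms(3)] assms by (intro mult_left_mono) auto
  moreover have "t * (v - w) \<le> t * (kl_term q v - v * ln (w / q))"
    using kl_term_tangent[OF assms(2) \<open>0 < w\<close> assms(3)] assms by (intro mult_left_mono) auto
  moreover have "kl_term q w = w * ln (w / q)"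
    using \<open>0 < w\<close> by (simp add: kl_term_def)
  ultimately show ?thesis
    by (simp add: w_def algebra_simps)
qed

lemma KL_nonneg:
  assumes "\<forall>a. 0 \<le> p a" "sum p UNIV = 1" "\<forall>a. 0 < q a" "sum q UNIV = 1"
  shows "0 \<le> KL p q"
proof -
  have "p a - q a \<le> kl_term (q a) (p a)" for a
  proof -
    have "0 \<le> p a" "0 < q a"
      using assms by auto
    then show ?thesis
      using kl_term_tangent[of "p a" "q a" "q a"] by simp
  qed
  then have "(\<Sum>a\<in>UNIV. p a - q a) \<le> KL p q"
    unfolding KL_eq_sum_kl_term by (intro sum_mono)
  then show ?thesis
    using assms by (simp add: sum_subtractf)
qed

lemma neg_mult_ln_le:
  fixes X :: real
  assumes "0 < X"
  shows "- X * ln X \<le> exp (-1)"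
proof -
  have "ln (exp (-1) / X) \<le> exp (-1) / X - 1"
    using assms by (intro ln_le_minus_one) auto
  then have "X * (- 1 - ln X) \<le> X * (exp (-1) / X - 1)"
    using assms by (intro mult_left_mono) (auto simp: ln_div)
  then show ?thesis
    using assms by (simp add: algebra_simps)
qed

(* Gibbs' inequality against the unnormalised weights m, of total mass X: the sum is at most
   X ln (sum p) - X ln X. *)
lemma sum_mult_ln_ratio_le:
  fixes m p :: "'a \<Rightarrow> real"
  assumes "finite S" "\<forall>a\<in>S. 0 < m a" "\<forall>a\<in>S. 0 < p a" "sum p S \<le> 1"
  shows "(\<Sum>a\<in>S. m a * (ln (p a) - ln (m a))) \<le> exp (-1)"
proof (cases "S = {}")
  case False
  define X where "X = sum m S"
  have "0 < X"
    unfolding X_def using assms False by (intro sum_pos) auto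
  have "m a * (ln (p a) - ln (m a)) \<le> X * p a - m a - m a * ln X" if "a \<in> S" for a
  proof -
    have "0 < m a" "0 < p a"
      using assms that by auto
    then have "m a * ln (X * p a / m a) \<le> m a * (X * p a / m a - 1)"
      using \<open>0 < X\<close> by (intro mult_left_mono ln_le_minus_one) auto
    moreover have "ln (X * p a / m a) = ln X + ln (p a) - ln (m a)"
      using \<open>0 < m a\<close> \<open>0 < p a\<close> \<open>0 < X\<close> by (simp add: ln_divide_pos ln_mult_pos)
    ultimately show ?thesis
      using \<open>0 < m a\<close> by (simp add: algebra_simps)
  qed
  then have "(\<Sum>a\<in>S. m a * (ln (p a) - ln (m a))) \<le> (\<Sum>a\<in>S. X * p a - m a - m a * ln X)"
    by (intro sum_mono)
  also have "\<dots> = X * sum p S - X - X * ln X"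
    by (simp add: X_def sum_subtractf sum_distrib_left sum_distrib_right)
  also have "\<dots> \<le> - X * ln X"
    using assms(4) \<open>0 < X\<close> by (simp add: mult_left_le)
  also have "\<dots> \<le> exp (-1)"
    using neg_mult_ln_le[OF \<open>0 < X\<close>] .
  finally show ?thesis .
qed simp

lemma sum_abs_ln_diff_le_KL:
  assumes m: "\<forall>a. 0 < m a" and p: "\<forall>a. 0 < p a" "sum p UNIV = 1" and eps: "\<forall>a. \<epsilon> \<le> m a"
  shows "\<epsilon> * (\<Sum>a\<in>UNIV. \<bar>ln (p a) - ln (m a)\<bar>) \<le> KL m p + 2 * exp (-1)"
proof -
  define S where "S = {a. m a < p a}"
  have "\<epsilon> * \<bar>ln (p a) - ln (m a)\<bar> \<le> m a * (ln (m a) - ln (p a))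
          + 2 * (if a \<in> S then m a * (ln (p a) - ln (m a)) else 0)" for a
  proof -
    have "\<epsilon> * \<bar>ln (p a) - ln (m a)\<bar> \<le> m a * \<bar>ln (p a) - ln (m a)\<bar>"
      using eps by (intro mult_right_mono) auto
    also have "\<dots> = m a * (ln (m a) - ln (p a)) + 2 * (if a \<in> S then m a * (ln (p a) - ln (m a)) else 0)"
      using m p by (auto simp: S_def abs_if algebra_simps)
    finally show ?thesis .
  qed
  then have "\<epsilon> * (\<Sum>a\<in>UNIV. \<bar>ln (p a) - ln (m a)\<bar>)
      \<le> (\<Sum>a\<in>UNIV. m a * (ln (m a) - ln (p a)) + 2 * (if a \<in> S then m a * (ln (p a) - ln (m a)) else 0))"
    unfolding sum_distrib_left by (intro sum_mono)
  also have "\<dots> = KL m p + 2 * (\<Sum>a\<in>UNIV. if a \<in> S then m a * (ln (p a) - ln (m a)) else 0)"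
    using m p by (simp add: KL_eq_sum_ln_diff sum.distrib sum_distrib_left)
  also have "\<dots> = KL m p + 2 * (\<Sum>a\<in>S. m a * (ln (p a) - ln (m a)))"
    by (simp add: sum.If_cases)
  also have "\<dots> \<le> KL m p + 2 * exp (-1)"
  proof -
    have "sum p S \<le> sum p UNIV"
      using p by (intro sum_mono2) (auto simp: less_imp_le)
    then show ?thesis
      using m p sum_mult_ln_ratio_le[of S m p] by simp
  qed
  finally show ?thesis .
qed

section \<open>The KL projection onto the Nash set\<close>

lemma simplex_le_one: "x \<in> simplex \<Longrightarrow> x a \<le> 1"
  using member_le_sum[of a UNIV x] by (auto simp: simplex_def)

lemma compact_nash: "compact (nash P)"
proof -
  have "compactin (product_topology (\<lambda>_. euclidean) UNIV) (PiE UNIV (\<lambda>_::'a. {0..1::real}))"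
    unfolding compactin_PiE by simp
  then have cube: "compact (PiE UNIV (\<lambda>_::'a. {0..1::real}))"
    unfolding euclidean_product_topology compactin_euclidean_iff .
  have "nash P = {x. (\<forall>a. 0 \<le> x a) \<and> sum x UNIV = 1 \<and> (\<forall>a. (\<Sum>b\<in>UNIV. P a b * x b) \<le> 0)}"
    by (auto simp: nash_def simplex_def mat_vec_def)
  also have "closed \<dots>"
    by (intro closed_Collect_conj closed_Collect_all closed_Collect_le closed_Collect_eq
        continuous_intros continuous_on_product_coordinates)
  finally have "closed (nash P)" .
  moreover have "nash P \<subseteq> PiE UNIV (\<lambda>_. {0..1})"
    by (auto simp: nash_def simplex_le_one) (auto simp: simplex_def)
  ultimately show ?thesis
    using compact_Int_closed[OF cube] by (metis Int_absorb1)
qed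

lemma nash_convex_comb:
  assumes "x \<in> nash P" "y \<in> nash P" "0 \<le> t" "t \<le> 1"
  shows "(\<lambda>b. (1 - t) * x b + t * y b) \<in> nash P"
proof -
  have "mat_vec P (\<lambda>b. (1 - t) * x b + t * y b) a = (1 - t) * mat_vec P x a + t * mat_vec P y a" for a
    unfolding mat_vec_def sum_distrib_left sum.distrib[symmetric] by (intro sum.cong) (simp_all add: algebra_simps)
  moreover have "(1 - t) * mat_vec P x a + t * mat_vec P y a \<le> 0" for a
    using assms by (intro add_nonpos_nonpos mult_nonneg_nonpos) (auto simp: nash_def)
  ultimately show ?thesis
    using assms
    by (auto simp: nash_def simplex_def sum.distrib sum_distrib_left[symmetric])
qed

lemma ex_KL_min_nash:
  assumes "nash P \<noteq> {}" "\<forall>a. 0 < q a"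
  shows "\<exists>m\<in>nash P. \<forall>\<sigma>\<in>nash P. KL m q \<le> KL \<sigma> q"
proof -
  have "continuous_on (nash P) (\<lambda>x. kl_term (q a) (x a))" for a
  proof (rule continuous_on_compose2[of "{0..}" "kl_term (q a)"])
    show "continuous_on {0..} (kl_term (q a))"
      using assms(2) by (intro continuous_on_kl_term) auto
    show "continuous_on (nash P) (\<lambda>x. x a)"
      by (rule continuous_on_subset[OF continuous_on_product_coordinates]) simp
  qed (auto simp: nash_def simplex_def)
  then have "continuous_on (nash P) (\<lambda>x. KL x q)"
    unfolding KL_eq_sum_kl_term by (intro continuous_on_sum)
  then show ?thesis
    using continuous_attains_inf[OF compact_nash assms(1)] by blast
qed

lemma KL_mix_le_at_zero:
  assumes q: "\<forall>b. 0 < q b" and m: "\<forall>b. 0 \<le> m b" "m a = 0" and \<sigma>: "\<forall>b. 0 \<le> \<sigma> b" "0 < \<sigma> a"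
    and t: "0 < t" "t \<le> 1"
  shows "KL (\<lambda>b. (1 - t) * m b + t * \<sigma> b) q \<le> (1 - t) * KL m q + t * KL \<sigma> q + t * (\<sigma> a * ln t)"
proof -
  have "kl_term (q b) ((1 - t) * m b + t * \<sigma> b)
      \<le> (1 - t) * kl_term (q b) (m b) + t * kl_term (q b) (\<sigma> b) + (if b = a then t * (\<sigma> a * ln t) else 0)"
    for b
  proof (cases "b = a")
    case True
    have "ln (t * (\<sigma> a / q a)) = ln t + ln (\<sigma> a / q a)"
      using t \<sigma> q by (intro ln_mult_pos) auto
    then show ?thesis
      using True m \<sigma> t by (simp add: kl_term_def algebra_simps)
  next
    case False
    then show ?thesis
      using kl_term_convex[of "m b" "\<sigma> b" "q b" t] m \<sigma> q t by simp
  qed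
  then have "KL (\<lambda>b. (1 - t) * m b + t * \<sigma> b) q
      \<le> (\<Sum>b\<in>UNIV. (1 - t) * kl_term (q b) (m b) + t * kl_term (q b) (\<sigma> b)
                   + (if b = a then t * (\<sigma> a * ln t) else 0))"
    unfolding KL_eq_sum_kl_term by (intro sum_mono)
  then show ?thesis
    by (simp add: KL_eq_sum_kl_term sum.distrib sum_distrib_left)
qed

lemma KL_min_nash_pos:
  assumes q: "\<forall>b. 0 < q b" and m: "m \<in> nash P" "\<forall>\<sigma>\<in>nash P. KL m q \<le> KL \<sigma> q"
    and \<sigma>: "\<sigma> \<in> nash P" "0 < \<sigma> a"
  shows "0 < m a"
proof (rule ccontr)
  assume "\<not> 0 < m a"
  have m_nonneg: "\<forall>b. 0 \<le> m b"
    using m(1) by (simp add: nash_def simplex_def)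
  with \<open>\<not> 0 < m a\<close> have "m a = 0"
    by (metis less_eq_real_def)
  define D where "D = KL m q - KL \<sigma> q"
  \<comment> \<open>small enough that the t ln t gain at the coordinate a outweighs the difference D\<close>
  define t where "t = exp (- (\<bar>D\<bar> + 1) / \<sigma> a)"
  have t: "0 < t" "t \<le> 1"
    unfolding t_def using \<sigma>(2) by (simp_all add: divide_nonpos_pos)
  have ln_t: "\<sigma> a * ln t = - (\<bar>D\<bar> + 1)"
    unfolding t_def using \<sigma>(2) by simp
  have "KL m q \<le> KL (\<lambda>b. (1 - t) * m b + t * \<sigma> b) q"
    using m(2) nash_convex_comb[OF m(1) \<sigma>(1)] t by simp
  also have "\<dots> \<le> (1 - t) * KL m q + t * KL \<sigma> q + t * (\<sigma> a * ln t)"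
    using \<sigma>(1) by (intro KL_mix_le_at_zero q m_nonneg \<open>m a = 0\<close> \<sigma>(2) t) (simp add: nash_def simplex_def)
  finally have "t * D \<le> t * (\<sigma> a * ln t)"
    by (simp add: D_def algebra_simps)
  then have "D \<le> \<sigma> a * ln t"
    using t by simp
  then show False
    using ln_t by linarith
qed

lemma kl_proj_is_min:
  assumes "nash P \<noteq> {}" "\<forall>a. 0 < q a"
  shows "kl_proj P q \<in> nash P" "\<forall>\<sigma>\<in>nash P. KL (kl_proj P q) q \<le> KL \<sigma> q"
proof -
  have "\<exists>m. m \<in> nash P \<and> (\<forall>\<sigma>\<in>nash P. KL m q \<le> KL \<sigma> q)"
    using ex_KL_min_nash[OF assms] by blast
  then show "kl_proj P q \<in> nash P" "\<forall>\<sigma>\<in>nash P. KL (kl_proj P q) q \<le> KL \<sigma> q"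
    unfolding kl_proj_def by (rule someI_ex[THEN conjunct1], rule someI_ex[THEN conjunct2])
qed

lemma kl_proj_pos:
  assumes full_support: "\<forall>a. \<exists>\<sigma>\<in>nash P. 0 < \<sigma> a" and q: "\<forall>a. 0 < q a"
  shows "0 < kl_proj P q a"
proof -
  from full_support obtain \<sigma> where "\<sigma> \<in> nash P" "0 < \<sigma> a"
    by blast
  moreover from this have "nash P \<noteq> {}"
    by blast
  ultimately show ?thesis
    using KL_min_nash_pos[OF q kl_proj_is_min[OF _ q]] by blast
qed

section \<open>Multiplicative-weights steps\<close>

lemma mw_step_pos:
  assumes "\<forall>a. 0 < x a"
  shows "\<forall>a. 0 < mw_step x g a" "sum (mw_step x g) UNIV = 1"
proof -
  have "0 < (\<Sum>b\<in>UNIV. x b * exp (g b))"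
    using assms by (intro sum_pos) auto
  then show "\<forall>a. 0 < mw_step x g a" "sum (mw_step x g) UNIV = 1"
    using assms by (simp_all add: mw_step_def sum_divide_distrib[symmetric])
qed

lemma omwu_iterates_pos:
  fixes pihat pi :: "nat \<Rightarrow> 'a::finite \<Rightarrow> real"
  assumes init: "\<forall>a. 0 < pihat 1 a" "sum (pihat 1) UNIV = 1"
    and pi_step: "\<forall>s\<ge>1. pi s = mw_step (pihat s) (g s)"
    and pihat_step: "\<forall>s\<ge>1. pihat (s + 1) = mw_step (pihat s) (h s)"
    and s: "1 \<le> s"
  shows "\<forall>a. 0 < pihat s a" "sum (pihat s) UNIV = 1" "\<forall>a. 0 < pi s a" "sum (pi s) UNIV = 1"
proof -
  from s show pihat_s: "\<forall>a. 0 < pihat s a" "sum (pihat s) UNIV = 1"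
  proof (induction s rule: nat_induct_at_least)
    case base
    show "\<forall>a. 0 < pihat 1 a" "sum (pihat 1) UNIV = 1"
      by (fact init)+
  next
    case (Suc s)
    then show "\<forall>a. 0 < pihat (Suc s) a" "sum (pihat (Suc s)) UNIV = 1"
      using pihat_step mw_step_pos by simp_all
  qed
  show "\<forall>a. 0 < pi s a" "sum (pi s) UNIV = 1"
    using pi_step s mw_step_pos[OF pihat_s(1)] by simp_all
qed

lemma abs_exp_minus_one_le:
  fixes x g :: real
  assumes "\<bar>g\<bar> \<le> x"
  shows "x * \<bar>exp g - 1\<bar> \<le> (exp x - 1) * \<bar>g\<bar>"
proof (cases "0 \<le> g")
  case True
  show ?thesis
  proof (cases "x = 0")
    case False
    with assms have "0 < x" by simp
    define s where "s = g / x"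
    have s: "0 \<le> s" "s \<le> 1" "s * x = g"
      using True assms \<open>0 < x\<close> by (auto simp: s_def)
    have "exp ((1 - s) *\<^sub>R 0 + s *\<^sub>R x) \<le> (1 - s) * exp 0 + s * exp x"
      using s by (intro convex_onD[OF exp_convex]) auto
    then have "exp g - 1 \<le> s * (exp x - 1)"
      using s by (simp add: algebra_simps)
    then have "x * (exp g - 1) \<le> x * (s * (exp x - 1))"
      using \<open>0 < x\<close> by (intro mult_left_mono) auto
    also have "\<dots> = (exp x - 1) * g"
      using \<open>0 < x\<close> by (simp add: s_def)
    finally show ?thesis
      using True by simp
  qed (use assms in simp)
next
  case False
  have "\<bar>exp g - 1\<bar> = 1 - exp g"
    using False by (simp add: abs_if)
  also have "\<dots> \<le> - g"
    using exp_ge_add_one_self[of g] by linarith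
  finally have "x * \<bar>exp g - 1\<bar> \<le> x * (- g)"
    using False assms by (intro mult_left_mono) auto
  also have "\<dots> \<le> (exp x - 1) * (- g)"
    using False exp_ge_add_one_self[of x] by (intro mult_right_mono) linarith+
  finally show ?thesis
    using False by simp
qed

lemma sum_abs_diff_mw_step_le:
  assumes q: "\<forall>a. 0 < q a" "sum q UNIV = 1" and g: "\<forall>b. - x \<le> g b"
  shows "(\<Sum>b\<in>UNIV. \<bar>q b - mw_step q g b\<bar>) \<le> 2 * exp x * (\<Sum>b\<in>UNIV. q b * \<bar>exp (g b) - 1\<bar>)"
proof -
  define Z where "Z = (\<Sum>b\<in>UNIV. q b * exp (g b))"
  define E where "E = (\<Sum>b\<in>UNIV. q b * \<bar>exp (g b) - 1\<bar>)"
  have "(\<Sum>b\<in>UNIV. q b * exp (- x)) \<le> Z"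
    unfolding Z_def using q g by (intro sum_mono mult_left_mono) (auto simp: less_imp_le)
  then have "exp (- x) \<le> Z"
    using q by (simp add: sum_distrib_right[symmetric])
  then have "0 < Z"
    using exp_gt_zero[of "- x"] by linarith
  have "1 / Z \<le> 1 / exp (- x)"
    using \<open>exp (- x) \<le> Z\<close> \<open>0 < Z\<close> by (intro divide_left_mono) auto
  then have "1 / Z \<le> exp x"
    by (simp add: exp_minus divide_inverse)
  have "\<bar>Z - 1\<bar> = \<bar>\<Sum>b\<in>UNIV. q b * (exp (g b) - 1)\<bar>"
    unfolding Z_def using q by (simp add: algebra_simps sum_subtractf)
  also have "\<dots> \<le> E"
    unfolding E_def by (intro order_trans[OF sum_abs] sum_mono) (simp add: abs_mult abs_of_pos q(1)[rule_format])
  finally have "\<bar>Z - 1\<bar> \<le> E" .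
  have "\<bar>q b - mw_step q g b\<bar> \<le> q b * (\<bar>Z - 1\<bar> + \<bar>exp (g b) - 1\<bar>) / Z" for b
  proof -
    have "q b - mw_step q g b = q b * (Z - exp (g b)) / Z"
      using \<open>0 < Z\<close> by (simp add: mw_step_def Z_def[symmetric] field_simps)
    then have "\<bar>q b - mw_step q g b\<bar> = q b * \<bar>Z - exp (g b)\<bar> / Z"
      using \<open>0 < Z\<close> by (simp add: abs_mult abs_divide abs_of_pos q(1)[rule_format])
    also have "\<dots> \<le> q b * (\<bar>Z - 1\<bar> + \<bar>exp (g b) - 1\<bar>) / Z"
      using \<open>0 < Z\<close> q by (intro divide_right_mono mult_left_mono) (auto simp: less_imp_le)
    finally show ?thesis .
  qed
  then have "(\<Sum>b\<in>UNIV. \<bar>q b - mw_step q g b\<bar>) \<le> (\<Sum>b\<in>UNIV. q b * (\<bar>Z - 1\<bar> + \<bar>exp (g b) - 1\<bar>) / Z)"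
    by (intro sum_mono)
  also have "\<dots> = (\<bar>Z - 1\<bar> + E) * (1 / Z)"
    unfolding E_def using q(2)
    by (simp add: sum_divide_distrib[symmetric] sum.distrib sum_distrib_right[symmetric] distrib_left add_divide_distrib)
  also have "\<dots> \<le> 2 * E * exp x"
    using \<open>\<bar>Z - 1\<bar> \<le> E\<close> \<open>1 / Z \<le> exp x\<close> \<open>0 < Z\<close> by (intro mult_mono) auto
  finally show ?thesis
    by (simp add: E_def mult_ac)
qed

lemma mw_step_l1_dist_le:
  assumes q: "\<forall>a. 0 < q a" "sum q UNIV = 1" and g: "\<forall>b. \<bar>g b\<bar> \<le> x"
  shows "x * (\<Sum>b\<in>UNIV. \<bar>q b - mw_step q g b\<bar>) \<le> 2 * exp x * (exp x - 1) * (\<Sum>b\<in>UNIV. q b * \<bar>g b\<bar>)"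
proof -
  have "0 \<le> x"
    using g abs_ge_zero order_trans by blast
  have "(\<Sum>b\<in>UNIV. \<bar>q b - mw_step q g b\<bar>) \<le> 2 * exp x * (\<Sum>b\<in>UNIV. q b * \<bar>exp (g b) - 1\<bar>)"
    using g by (intro sum_abs_diff_mw_step_le q) (metis abs_le_iff minus_le_iff)
  then have "x * (\<Sum>b\<in>UNIV. \<bar>q b - mw_step q g b\<bar>) \<le> x * (2 * exp x * (\<Sum>b\<in>UNIV. q b * \<bar>exp (g b) - 1\<bar>))"
    using \<open>0 \<le> x\<close> by (rule mult_left_mono)
  also have "\<dots> = 2 * exp x * (\<Sum>b\<in>UNIV. q b * (x * \<bar>exp (g b) - 1\<bar>))"
    by (simp add: sum_distrib_left mult_ac)
  also have "\<dots> \<le> 2 * exp x * (\<Sum>b\<in>UNIV. q b * ((exp x - 1) * \<bar>g b\<bar>))"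
    using q g by (intro mult_left_mono sum_mono abs_exp_minus_one_le) (auto simp: less_imp_le)
  also have "\<dots> = 2 * exp x * (exp x - 1) * (\<Sum>b\<in>UNIV. q b * \<bar>g b\<bar>)"
    by (simp add: sum_distrib_left sum_distrib_right mult_ac)
  finally show ?thesis .
qed

lemma exp_mult_exp_minus_one_le:
  fixes x :: real
  assumes "0 \<le> x"
  shows "2 * exp x * (exp x - 1) \<le> (exp (2 * x) - 1) * (exp x + 1) / 2"
proof -
  define y where "y = exp x"
  have "1 \<le> y"
    unfolding y_def using assms by simp
  have "(exp (2 * x) - 1) * (exp x + 1) = (y * y - 1) * (y + 1)"
    unfolding y_def by (simp add: exp_add[symmetric])
  moreover have "(y * y - 1) * (y + 1) - 4 * (y * (y - 1)) = (y - 1) ^ 3"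
    by (simp add: power3_eq_cube algebra_simps)
  moreover have "0 \<le> (y - 1) ^ 3"
    using \<open>1 \<le> y\<close> by simp
  ultimately show ?thesis
    unfolding y_def[symmetric] by linarith
qed

lemma abs_le_maxabs: "\<bar>P a b\<bar> \<le> maxabs P"
proof -
  have "{\<bar>P a b\<bar> | a b. True} = (\<lambda>(a, b). \<bar>P a b\<bar>) ` UNIV"
    by auto
  then show ?thesis
    unfolding maxabs_def by (intro Max_ge) auto
qed

lemma maxabs_nonneg: "0 \<le> maxabs P"
  using abs_le_maxabs abs_ge_zero order_trans by blast

lemma abs_mat_vec_le: "\<bar>mat_vec P x a\<bar> \<le> maxabs P * (\<Sum>b\<in>UNIV. \<bar>x b\<bar>)"
proof -
  have "\<bar>mat_vec P x a\<bar> \<le> (\<Sum>b\<in>UNIV. \<bar>P a b\<bar> * \<bar>x b\<bar>)"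
    unfolding mat_vec_def abs_mult[symmetric] by (rule sum_abs)
  also have "\<dots> \<le> (\<Sum>b\<in>UNIV. maxabs P * \<bar>x b\<bar>)"
    by (intro sum_mono mult_right_mono abs_le_maxabs) simp
  finally show ?thesis
    by (simp add: sum_distrib_left)
qed

lemma mat_vec_diff: "mat_vec P x a - mat_vec P y a = mat_vec P (\<lambda>b. x b - y b) a"
  by (simp add: mat_vec_def sum_subtractf right_diff_distrib)

lemma mw_step_mat_vec_l1_dist_le:
  fixes P :: "'a::finite \<Rightarrow> 'a \<Rightarrow> real"
  assumes q: "\<forall>a. 0 < q a" "sum q UNIV = 1" and r: "\<forall>a. 0 \<le> r a" "sum r UNIV = 1" and eta: "0 \<le> \<eta>"
  shows "\<eta> * maxabs P * (\<Sum>b\<in>UNIV. \<bar>q b - mw_step q (\<lambda>a. \<eta> * mat_vec P r a) b\<bar>)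
         \<le> (exp (2 * \<eta> * maxabs P) - 1) * (exp (\<eta> * maxabs P) + 1) / 2
           * real (card (UNIV :: 'a set)) * Max (range (\<lambda>a. q a * \<bar>\<eta> * mat_vec P r a\<bar>))"
proof -
  define x where "x = \<eta> * maxabs P"
  define g where "g = (\<lambda>a. \<eta> * mat_vec P r a)"
  define K where "K = Max (range (\<lambda>a. q a * \<bar>g a\<bar>))"
  have "0 \<le> x"
    unfolding x_def using eta maxabs_nonneg by (rule mult_nonneg_nonneg)
  have g: "\<forall>b. \<bar>g b\<bar> \<le> x"
    unfolding g_def x_def using eta abs_mat_vec_le[of P r] r by (simp add: abs_mult mult_left_mono)
  have "q a * \<bar>g a\<bar> \<le> K" for a
    unfolding K_def by (intro Max_ge) auto
  then have "(\<Sum>b\<in>UNIV. q b * \<bar>g b\<bar>) \<le> real (card (UNIV :: 'a set)) * K"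
    using sum_mono[of UNIV "\<lambda>b. q b * \<bar>g b\<bar>" "\<lambda>_. K"] by simp
  have "x * (\<Sum>b\<in>UNIV. \<bar>q b - mw_step q g b\<bar>) \<le> 2 * exp x * (exp x - 1) * (\<Sum>b\<in>UNIV. q b * \<bar>g b\<bar>)"
    by (rule mw_step_l1_dist_le[OF q g])
  also have "\<dots> \<le> (exp (2 * x) - 1) * (exp x + 1) / 2 * (\<Sum>b\<in>UNIV. q b * \<bar>g b\<bar>)"
    using exp_mult_exp_minus_one_le[OF \<open>0 \<le> x\<close>] q(1)
    by (intro mult_right_mono sum_nonneg) (auto simp: less_imp_le)
  also have "\<dots> \<le> (exp (2 * x) - 1) * (exp x + 1) / 2 * (real (card (UNIV :: 'a set)) * K)"
    using \<open>(\<Sum>b\<in>UNIV. q b * \<bar>g b\<bar>) \<le> real (card UNIV) * K\<close> \<open>0 \<le> x\<close>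
    by (intro mult_left_mono) (auto simp: add_nonneg_pos)
  finally show ?thesis
    by (simp add: x_def g_def K_def mult.assoc)
qed

section \<open>The one-step estimate\<close>

lemma inner_prod_ge_neg_l1:
  assumes "\<forall>a. \<bar>y a\<bar> \<le> B"
  shows "- (B * (\<Sum>a\<in>UNIV. \<bar>x a\<bar>)) \<le> inner_prod x y"
proof -
  have "\<bar>inner_prod x y\<bar> \<le> (\<Sum>a\<in>UNIV. \<bar>x a\<bar> * \<bar>y a\<bar>)"
    unfolding Defs.inner_prod_def abs_mult[symmetric] by (rule sum_abs)
  also have "\<dots> \<le> (\<Sum>a\<in>UNIV. \<bar>x a\<bar> * B)"
    using assms by (intro sum_mono mult_left_mono) auto
  also have "\<dots> = B * (\<Sum>a\<in>UNIV. \<bar>x a\<bar>)"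
    by (simp add: sum_distrib_left mult.commute)
  finally show ?thesis
    by (simp add: abs_le_iff)
qed

lemma omwu_step_inner_ge:
  fixes P :: "'a::finite \<Rightarrow> 'a \<Rightarrow> real"
  assumes q: "\<forall>a. 0 < q a" "sum q UNIV = 1" and r: "\<forall>a. 0 \<le> r a" "sum r UNIV = 1"
    and p: "p = mw_step q (\<lambda>a. \<eta> * mat_vec P r a)"
    and m: "\<forall>a. 0 < m a" and eps: "0 < \<epsilon>" "\<forall>a. \<epsilon> \<le> m a" and eta: "0 \<le> \<eta>"
    and Theta: "KL m p \<le> Theta"
  shows "- ((exp (2 * \<eta> * maxabs P) - 1) * (exp (\<eta> * maxabs P) + 1) / (2 * \<epsilon>))
           * real (card (UNIV :: 'a set)) * (Theta + 2 * exp (-1)) * Max (range (\<lambda>a. q a * \<bar>\<eta> * mat_vec P r a\<bar>))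
         \<le> inner_prod (\<lambda>a. ln (p a) - ln (m a)) (\<lambda>a. \<eta> * mat_vec P q a - \<eta> * mat_vec P p a)"
proof -
  define C where "C = (exp (2 * \<eta> * maxabs P) - 1) * (exp (\<eta> * maxabs P) + 1) / 2
    * real (card (UNIV :: 'a set)) * Max (range (\<lambda>a. q a * \<bar>\<eta> * mat_vec P r a\<bar>))"
  define dist where "dist = \<eta> * maxabs P * (\<Sum>b\<in>UNIV. \<bar>q b - p b\<bar>)"
  define lnsum where "lnsum = (\<Sum>a\<in>UNIV. \<bar>ln (p a) - ln (m a)\<bar>)"
  have dist: "dist \<le> C"
    unfolding dist_def C_def p by (rule mw_step_mat_vec_l1_dist_le[OF q r eta])
  have "\<forall>a. 0 < p a" "sum p UNIV = 1"
    unfolding p by (rule mw_step_pos[OF q(1)])+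
  then have "\<epsilon> * lnsum \<le> Theta + 2 * exp (-1)"
    unfolding lnsum_def using sum_abs_ln_diff_le_KL[OF m _ _ eps(2)] Theta by fastforce
  then have lnsum: "lnsum \<le> (Theta + 2 * exp (-1)) / \<epsilon>"
    using eps(1) by (simp add: pos_le_divide_eq mult.commute)
  have "\<bar>\<eta> * mat_vec P q a - \<eta> * mat_vec P p a\<bar> \<le> dist" for a
    using eta abs_mat_vec_le[of P "\<lambda>b. q b - p b" a]
    by (simp add: dist_def mat_vec_diff right_diff_distrib[symmetric] abs_mult mult_left_mono mult.assoc)
  then have "- (dist * lnsum) \<le> inner_prod (\<lambda>a. ln (p a) - ln (m a)) (\<lambda>a. \<eta> * mat_vec P q a - \<eta> * mat_vec P p a)"
    unfolding lnsum_def by (intro inner_prod_ge_neg_l1) auto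
  moreover have "0 \<le> dist"
    unfolding dist_def using eta maxabs_nonneg by (intro mult_nonneg_nonneg sum_nonneg) auto
  then have "dist * lnsum \<le> C * ((Theta + 2 * exp (-1)) / \<epsilon>)"
    using dist by (intro mult_mono lnsum) (auto simp: lnsum_def sum_nonneg)
  ultimately show ?thesis
    by (simp add: C_def mult_ac)
qed

theorem mainTheorem18:
  fixes P :: "'a::finite \<Rightarrow> 'a \<Rightarrow> real"
    and \<eta> :: real
    and pihat pi :: "nat \<Rightarrow> 'a \<Rightarrow> real"
    and t :: nat
  assumes skew: "skew_symmetric P"
    and full_support: "\<forall>a. \<exists>\<pi>\<in>nash P. 0 < \<pi> a"
    and eta_pos: "0 < \<eta>"
    and eta_L: "\<eta> * maxabs P < 1/2"
    and init_simplex: "pihat 1 \<in> simplex"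
    and init_pos: "\<forall>a. 0 < pihat 1 a"
    and pi0: "pi 0 = pihat 1"
    and pi_step: "\<forall>s\<ge>1. pi s = mw_step (pihat s) (\<lambda>a. \<eta> * mat_vec P (pi (s - 1)) a)"
    and pihat_step: "\<forall>s\<ge>1. pihat (s + 1) = mw_step (pihat s) (\<lambda>a. \<eta> * mat_vec P (pi s) a)"
    and t: "1 \<le> t"
  shows
    "let L = maxabs P;
         pistar = kl_proj P (pihat 1);
         \<epsilon> = Min (range pistar);
         Theta = KL pistar (pihat (t + 1)) + 4 * \<eta>\<^sup>2 * L\<^sup>2 * KL (pihat (t + 1)) (pi t);
         Khat = Max (range (\<lambda>a. pihat t a * \<bar>\<eta> * mat_vec P (pi t) a\<bar>))
     in inner_prod (\<lambda>a. ln (pihat (t + 1) a) - ln (pistar a))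
                   (\<lambda>a. \<eta> * mat_vec P (pihat t) a - \<eta> * mat_vec P (pihat (t + 1)) a)
        \<ge> - ((exp (2 * \<eta> * L) - 1) * (exp (\<eta> * L) + 1) / (2 * \<epsilon>))
            * real (card (UNIV :: 'a set)) * (Theta + 2 * exp (-1)) * Khat"
proof -
  have "sum (pihat 1) UNIV = 1"
    using init_simplex by (simp add: simplex_def)
  note iterate = omwu_iterates_pos[OF init_pos this pi_step pihat_step]
  have step: "pihat (t + 1) = mw_step (pihat t) (\<lambda>a. \<eta> * mat_vec P (pi t) a)"
    using pihat_step t by simp
  define pistar where "pistar = kl_proj P (pihat 1)"
  have pistar_pos: "\<forall>a. 0 < pistar a"
    unfolding pistar_def using kl_proj_pos[OF full_support init_pos] by blast
  have "Min (range pistar) \<in> range pistar" "\<forall>a. Min (range pistar) \<le> pistar a"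
    by (simp_all add: Min_in)
  then have eps: "0 < Min (range pistar)" "\<forall>a. Min (range pistar) \<le> pistar a"
    using pistar_pos by auto
  have "0 \<le> KL (pihat (t + 1)) (pi t)"
    using iterate[of "t + 1"] iterate[of t] t by (intro KL_nonneg) (auto simp: less_imp_le)
  then have Theta: "KL pistar (pihat (t + 1))
      \<le> KL pistar (pihat (t + 1)) + 4 * \<eta>\<^sup>2 * (maxabs P)\<^sup>2 * KL (pihat (t + 1)) (pi t)"
    by simp
  show ?thesis
    unfolding Let_def pistar_def[symmetric]
    using iterate[of t] t pistar_pos eps eta_pos
    by (intro omwu_step_inner_ge[OF _ _ _ _ step _ _ _ _ Theta]) (auto simp: less_imp_le)
qed

end
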